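(* Let $\xi,\eta\in\mathbb{R}$ and, for $x>0$, set $$K(x)=\frac{\ln x-9 \ln(1+x)+8 \ln(2+x)}{24}-\frac{18+33 x+14 x^2}{48 (1+x)^2 (2+x)},$$ $$M(x)=\psi(x)-\frac{28 x^4+87 x^3+73 x^2+3 x-12}{6 x (x+1)^3 (x+2)}-\frac{43\ln (x+1)-37\ln(x+2)}{6}.$$ Then the double inequality $\xi K(x)<M(x)<\eta K(x)$ holds for all $x\in(0,\infty)$ if and only if $\xi\ge4$ and $\eta\le0$.
   Context: $\Gamma$ is Euler's gamma function and $\psi=\Gamma'/\Gamma$ is the digamma function; $\ln$ is the natural logarithm. *)

theory Defs
  imports "HOL-Analysis.Analysis"
begin

definition K_fun :: "real \<Rightarrow> real" where
  "K_fun x = (ln x - 9 * ln (1 + x) + 8 * ln (2 + x)) / 24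
             - (18 + 33 * x + 14 * x^2) / (48 * (1 + x)^2 * (2 + x))"

definition M_fun :: "real \<Rightarrow> real" where
  "M_fun x = Digamma x
             - (28 * x^4 + 87 * x^3 + 73 * x^2 + 3 * x - 12) / (6 * x * (x + 1)^3 * (x + 2))
             - (43 * ln (x + 1) - 37 * ln (x + 2)) / 6"

end

theory Submission
  imports Defs "HOL-Real_Asymp.Real_Asymp"
begin

text \<open>By \<open>\<psi>(x + 1) = \<psi>(x) + 1/x\<close>, the difference \<open>M(x) - M(x + 1)\<close>, like \<open>K(x) - K(x + 1)\<close>,
  is elementary; as \<open>M\<close> and \<open>K\<close> vanish at infinity, each is the sum of its differences along
  \<open>x, x + 1, x + 2, \<dots>\<close>. Every elementary function involved is given a sign by one device: it
  tends to \<open>0\<close> at infinity and its derivative is a rational function of constant sign. This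
  yields \<open>K < 0\<close>, \<open>M < 0\<close> and \<open>M > 4 K\<close>, hence sufficiency. Quantitatively,
  \<open>M - 4 K = O(x\<^sup>-\<^sup>4)\<close> while \<open>K < -(x + 1)\<^sup>-\<^sup>3 / 30\<close>, which excludes \<open>\<xi> < 4\<close> for large \<open>x\<close>;
  and \<open>K(x) \<sim> ln x / 24 \<rightarrow> -\<infinity>\<close> as \<open>x \<rightarrow> 0\<^sup>+\<close> while \<open>M\<close> stays bounded below, which excludes \<open>\<eta> > 0\<close>.\<close>

lemma neg_if_deriv_pos_tendsto_0:
  fixes f f' :: "real \<Rightarrow> real"
  assumes deriv: "\<And>y. y > a \<Longrightarrow> (f has_real_derivative f' y) (at y)"
    and pos: "\<And>y. y > a \<Longrightarrow> f' y > 0"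
    and lim: "(f \<longlongrightarrow> 0) at_top"
    and "x > a"
  shows "f x < 0"
proof -
  have mono: "f y < f z" if "a < y" "y < z" for y z
  proof (rule DERIV_pos_imp_increasing[OF \<open>y < z\<close>])
    fix t assume "y \<le> t" "t \<le> z"
    with that show "\<exists>D. (f has_real_derivative D) (at t) \<and> D > 0"
      using deriv pos by (meson less_le_trans)
  qed
  have "f (x + 1) \<le> 0"
  proof (rule tendsto_lowerbound[OF lim])
    show "\<forall>\<^sub>F z in at_top. f (x + 1) \<le> f z"
      using eventually_gt_at_top[of "x + 1"]
      by eventually_elim (use mono[of "x + 1"] \<open>x > a\<close> in \<open>auto intro: less_imp_le\<close>)
  qed simp
  with mono[of x "x + 1"] \<open>x > a\<close> show ?thesis by simp
qed

lemma tendsto_shifted_sequentially: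
  fixes f :: "real \<Rightarrow> 'a::topological_space"
  assumes "(f \<longlongrightarrow> l) at_top"
  shows "(\<lambda>n. f (x + real n)) \<longlonglongrightarrow> l"
  using filterlim_compose[OF assms filterlim_tendsto_add_at_top[OF tendsto_const filterlim_real_sequentially]] .

lemma sums_of_shift_difference:
  fixes g d :: "real \<Rightarrow> 'a::real_normed_vector"
  assumes "\<And>k. g (x + real k) - g (x + real k + 1) = d (x + real k)"
    and "(\<lambda>n. g (x + real n)) \<longlonglongrightarrow> 0"
  shows "(\<lambda>k. d (x + real k)) sums g x"
  using telescope_sums'[OF assms(2)] assms(1) by (simp add: algebra_simps)

lemma sums_pos: "f sums s \<Longrightarrow> (\<And>n. 0 < f n) \<Longrightarrow> (0::real) < s"
  using suminf_pos sums_summable sums_unique by metis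

text \<open>Writing every function below as a linear combination of
  \<open>ipow\<close> and \<open>lnsh\<close>, a family closed under \<open>x \<mapsto> x + 1\<close> and under differentiation,
  lets differences and derivatives be computed by linear rewriting alone.\<close>

definition ipow :: "real \<Rightarrow> nat \<Rightarrow> real \<Rightarrow> real" where
  "ipow a k x = inverse (x + a) ^ k"

definition lnsh :: "real \<Rightarrow> real \<Rightarrow> real" where
  "lnsh a x = ln (x + a)"

lemma has_real_derivative_ipow [derivative_intros]:
  assumes "x + a \<noteq> 0" "D = - real k * ipow a (k + 1) x"
  shows "((\<lambda>x. ipow a k x) has_real_derivative D) (at x)"
proof -
  have "((\<lambda>x. inverse (x + a) ^ k) has_real_derivative
          real k * inverse (x + a) ^ (k - 1) * - (inverse (x + a) * inverse (x + a))) (at x)"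
    using assms(1) by (auto intro!: derivative_eq_intros)
  moreover have "real k * inverse (x + a) ^ (k - 1) * - (inverse (x + a) * inverse (x + a)) = D"
    unfolding assms(2) ipow_def by (cases k) (simp_all add: algebra_simps)
  ultimately show ?thesis unfolding ipow_def by simp
qed

lemma has_real_derivative_lnsh [derivative_intros]:
  "x + a > 0 \<Longrightarrow> D = ipow a 1 x \<Longrightarrow> ((\<lambda>x. lnsh a x) has_real_derivative D) (at x)"
  unfolding lnsh_def ipow_def by (auto intro!: derivative_eq_intros simp: field_simps)

lemma inverse_shifts_cancel:
  fixes x :: real
  assumes "x > 0"
  shows "x * inverse x = 1" "(x + 1) * inverse (x + 1) = 1"
    "(x + 2) * inverse (x + 2) = 1" "(x + 3) * inverse (x + 3) = 1"
  using assms by simp_all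

definition K_pf :: "real \<Rightarrow> real" where
  "K_pf x = (lnsh 0 x - 9 * lnsh 1 x + 8 * lnsh 2 x) / 24
            - 1/8 * ipow 1 1 x + 1/48 * ipow 1 2 x - 1/6 * ipow 2 1 x"

definition M_rat :: "real \<Rightarrow> real" where
  "M_rat x = - ipow 0 1 x + 7/2 * ipow 1 1 x - ipow 1 2 x + 1/6 * ipow 1 3 x + 13/6 * ipow 2 1 x"

lemma K_fun_eq: assumes "x > 0" shows "K_fun x = K_pf x"
proof -
  have "(1/8 * ipow 1 1 x - 1/48 * ipow 1 2 x + 1/6 * ipow 2 1 x) * (48 * (1 + x)^2 * (2 + x))
          = 18 + 33 * x + 14 * x^2"
    using inverse_shifts_cancel[OF assms] unfolding ipow_def by algebra
  then have "(18 + 33 * x + 14 * x^2) / (48 * (1 + x)^2 * (2 + x))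
               = 1/8 * ipow 1 1 x - 1/48 * ipow 1 2 x + 1/6 * ipow 2 1 x"
    using assms by (simp add: divide_eq_eq)
  then show ?thesis unfolding K_fun_def K_pf_def lnsh_def by (simp add: add.commute)
qed

lemma M_fun_eq:
  assumes "x > 0"
  shows "M_fun x = Digamma x - M_rat x - (43 * lnsh 1 x - 37 * lnsh 2 x) / 6"
proof -
  have "M_rat x * (6 * x * (x + 1)^3 * (x + 2)) = 28 * x^4 + 87 * x^3 + 73 * x^2 + 3 * x - 12"
    using inverse_shifts_cancel[OF assms] unfolding M_rat_def ipow_def add_0_right by algebra
  with assms show ?thesis unfolding M_fun_def lnsh_def by (simp add: divide_eq_eq)
qed

definition K_diff :: "real \<Rightarrow> real" where
  "K_diff x = - 1/8 * ipow 1 1 x + 1/48 * ipow 1 2 x - 1/24 * ipow 2 1 x - 1/48 * ipow 2 2 x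
              + 1/6 * ipow 3 1 x + (lnsh 0 x - 10 * lnsh 1 x + 17 * lnsh 2 x - 8 * lnsh 3 x) / 24"

definition M_diff :: "real \<Rightarrow> real" where
  "M_diff x = - 9/2 * ipow 1 1 x + ipow 1 2 x - 1/6 * ipow 1 3 x + 4/3 * ipow 2 1 x - ipow 2 2 x
              + 1/6 * ipow 2 3 x + 13/6 * ipow 3 1 x + (80 * lnsh 2 x - 43 * lnsh 1 x - 37 * lnsh 3 x) / 6"

lemma K_pf_diff: "K_pf x - K_pf (x + 1) = K_diff x"
proof -
  have shifts: "x + 1 + 1 = x + 2" "x + 1 + 2 = x + 3" "x + 1 + 0 = x + 1" "x + 0 = x" by simp_all
  show ?thesis unfolding K_pf_def K_diff_def ipow_def lnsh_def shifts
    by (simp add: algebra_simps add_divide_distrib diff_divide_distrib)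
qed

lemma M_fun_diff: assumes "x > 0" shows "M_fun x - M_fun (x + 1) = M_diff x"
proof -
  have psi: "Digamma (x + 1) = Digamma x + inverse x"
    using Digamma_plus1[of x] assms by (simp add: inverse_eq_divide)
  have shifts: "x + 1 + 1 = x + 2" "x + 1 + 2 = x + 3" "x + 1 + 0 = x + 1" "x + 0 = x" by simp_all
  have "M_fun x - M_fun (x + 1) = (Digamma x - M_rat x - (43 * lnsh 1 x - 37 * lnsh 2 x) / 6)
      - (Digamma (x + 1) - M_rat (x + 1) - (43 * lnsh 1 (x + 1) - 37 * lnsh 2 (x + 1)) / 6)"
    using M_fun_eq[OF assms] M_fun_eq[of "x + 1"] assms by simp
  also have "\<dots> = M_diff x"
    unfolding psi M_rat_def M_diff_def ipow_def lnsh_def shifts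
    by (simp add: algebra_simps add_divide_distrib diff_divide_distrib)
  finally show ?thesis .
qed

definition K_pf' :: "real \<Rightarrow> real" where
  "K_pf' x = (ipow 0 1 x - 9 * ipow 1 1 x + 8 * ipow 2 1 x) / 24
             + 1/8 * ipow 1 2 x - 1/24 * ipow 1 3 x + 1/6 * ipow 2 2 x"

definition K_diff' :: "real \<Rightarrow> real" where
  "K_diff' x = 1/8 * ipow 1 2 x - 1/24 * ipow 1 3 x + 1/24 * ipow 2 2 x + 1/24 * ipow 2 3 x
               - 1/6 * ipow 3 2 x + (ipow 0 1 x - 10 * ipow 1 1 x + 17 * ipow 2 1 x - 8 * ipow 3 1 x) / 24"

definition M_diff' :: "real \<Rightarrow> real" where
  "M_diff' x = 9/2 * ipow 1 2 x - 2 * ipow 1 3 x + 1/2 * ipow 1 4 x - 4/3 * ipow 2 2 x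
               + 2 * ipow 2 3 x - 1/2 * ipow 2 4 x - 13/6 * ipow 3 2 x - 43/6 * ipow 1 1 x
               + 40/3 * ipow 2 1 x - 37/6 * ipow 3 1 x"

definition G_diff :: "real \<Rightarrow> real" where
  "G_diff x = M_diff x - 4 * K_diff x"

definition G_diff' :: "real \<Rightarrow> real" where
  "G_diff' x = M_diff' x - 4 * K_diff' x"

lemma has_real_derivative_K_pf: "x > 0 \<Longrightarrow> (K_pf has_real_derivative K_pf' x) (at x)"
  unfolding K_pf_def[abs_def] K_pf'_def
  by (rule derivative_eq_intros refl | simp)+
    (simp add: algebra_simps eval_nat_numeral add_divide_distrib diff_divide_distrib)

lemma has_real_derivative_K_diff: "x > 0 \<Longrightarrow> (K_diff has_real_derivative K_diff' x) (at x)"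
  unfolding K_diff_def[abs_def] K_diff'_def
  by (rule derivative_eq_intros refl | simp)+
    (simp add: algebra_simps eval_nat_numeral add_divide_distrib diff_divide_distrib)

lemma has_real_derivative_M_diff: "x > 0 \<Longrightarrow> (M_diff has_real_derivative M_diff' x) (at x)"
  unfolding M_diff_def[abs_def] M_diff'_def
  by (rule derivative_eq_intros refl | simp)+
    (simp add: algebra_simps eval_nat_numeral add_divide_distrib diff_divide_distrib)

lemma has_real_derivative_G_diff: "x > 0 \<Longrightarrow> (G_diff has_real_derivative G_diff' x) (at x)"
  unfolding G_diff_def[abs_def] G_diff'_def
  by (intro DERIV_diff DERIV_cmult has_real_derivative_M_diff has_real_derivative_K_diff)

lemma K_pf_tendsto_0: "(K_pf \<longlongrightarrow> 0) at_top"
  unfolding K_pf_def ipow_def lnsh_def by real_asymp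

lemma K_diff_tendsto_0: "(K_diff \<longlongrightarrow> 0) at_top"
  unfolding K_diff_def ipow_def lnsh_def by real_asymp

lemma M_diff_tendsto_0: "(M_diff \<longlongrightarrow> 0) at_top"
  unfolding M_diff_def ipow_def lnsh_def by real_asymp

lemma G_diff_tendsto_0: "(G_diff \<longlongrightarrow> 0) at_top"
  unfolding G_diff_def[abs_def]
  using tendsto_diff[OF M_diff_tendsto_0 tendsto_mult_right_zero[OF K_diff_tendsto_0]] by simp

lemma M_diff'_pos: assumes "x > 0" shows "M_diff' x > 0"
proof -
  have "M_diff' x * ((x + 1)^4 * (x + 2)^4 * (x + 3)^2)
          = 77/6 + 127/3 * x + 419/6 * x^2 + 172/3 * x^3 + 67/3 * x^4 + 10/3 * x^5"
    using inverse_shifts_cancel[OF assms] unfolding M_diff'_def ipow_def by algebra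
  moreover have "0 < 77/6 + 127/3 * x + 419/6 * x^2 + 172/3 * x^3 + 67/3 * x^4 + 10/3 * x^5"
    using assms by (simp add: add_pos_pos)
  moreover have "0 < (x + 1)^4 * (x + 2)^4 * (x + 3)^2" using assms by simp
  ultimately show ?thesis by (metis zero_less_mult_pos2)
qed

lemma G_diff'_neg: assumes "x > 0" shows "G_diff' x < 0"
proof -
  have "- G_diff' x * (x * (x + 1)^4 * (x + 2)^4 * (x + 3)^2)
          = 24 + 187/2 * x + 309/2 * x^2 + 368/3 * x^3 + 93/2 * x^4 + 41/6 * x^5"
    using inverse_shifts_cancel[OF assms]
    unfolding G_diff'_def M_diff'_def K_diff'_def ipow_def add_0_right by algebra
  moreover have "0 < 24 + 187/2 * x + 309/2 * x^2 + 368/3 * x^3 + 93/2 * x^4 + 41/6 * x^5"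
    using assms by (simp add: add_pos_pos)
  moreover have "0 < x * (x + 1)^4 * (x + 2)^4 * (x + 3)^2" using assms by simp
  ultimately have "0 < - G_diff' x" by (metis zero_less_mult_pos2)
  then show ?thesis by simp
qed

lemma G_diff'_plus_ipow_pos: assumes "x > 0" shows "G_diff' x + 10 * ipow 0 6 x > 0"
proof -
  have "(G_diff' x + 10 * ipow 0 6 x) * (x^6 * (x + 1)^4 * (x + 2)^4 * (x + 3)^2)
          = 1440 + 9600 * x + 28240 * x^2 + 48240 * x^3 + 52970 * x^4 + 39036 * x^5
            + 38993/2 * x^6 + 12891/2 * x^7 + 3922/3 * x^8 + 267/2 * x^9 + 19/6 * x^10"
    using inverse_shifts_cancel[OF assms]
    unfolding G_diff'_def M_diff'_def K_diff'_def ipow_def add_0_right by algebra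
  moreover have "0 < 1440 + 9600 * x + 28240 * x^2 + 48240 * x^3 + 52970 * x^4 + 39036 * x^5
            + 38993/2 * x^6 + 12891/2 * x^7 + 3922/3 * x^8 + 267/2 * x^9 + 19/6 * x^10"
    using assms by (simp add: add_pos_pos)
  moreover have "0 < x^6 * (x + 1)^4 * (x + 2)^4 * (x + 3)^2" using assms by simp
  ultimately show ?thesis by (metis zero_less_mult_pos2)
qed

lemma K_pf'_minus_ipow_pos: assumes "x > 0" shows "K_pf' x - 1/10 * ipow 1 4 x > 0"
proof -
  have "(K_pf' x - 1/10 * ipow 1 4 x) * (x * (x + 1)^4 * (x + 2)^2)
          = 1/6 + 1/10 * x + 17/120 * x^2 + 13/120 * x^3"
    using inverse_shifts_cancel[OF assms] unfolding K_pf'_def ipow_def add_0_right by algebra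
  moreover have "0 < 1/6 + 1/10 * x + 17/120 * x^2 + 13/120 * x^3"
    using assms by (simp add: add_pos_pos)
  moreover have "0 < x * (x + 1)^4 * (x + 2)^2" using assms by simp
  ultimately show ?thesis by (metis zero_less_mult_pos2)
qed

lemma M_diff_neg: "x > 0 \<Longrightarrow> M_diff x < 0"
  by (rule neg_if_deriv_pos_tendsto_0[OF has_real_derivative_M_diff M_diff'_pos M_diff_tendsto_0])

lemma G_diff_pos: assumes "x > 0" shows "G_diff x > 0"
proof -
  have "- G_diff x < 0"
    using assms G_diff'_neg tendsto_minus[OF G_diff_tendsto_0]
    by (intro neg_if_deriv_pos_tendsto_0[where a = 0 and f = "\<lambda>y. - G_diff y"
          and f' = "\<lambda>y. - G_diff' y"] DERIV_minus has_real_derivative_G_diff) auto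
  then show ?thesis by simp
qed

lemma G_diff_upper: assumes "x > 0" shows "G_diff x < 2 * ipow 0 5 x"
proof -
  have "G_diff x - 2 * ipow 0 5 x < 0"
  proof (rule neg_if_deriv_pos_tendsto_0[where a = 0 and f = "\<lambda>y. G_diff y - 2 * ipow 0 5 y"
      and f' = "\<lambda>y. G_diff' y + 10 * ipow 0 6 y"])
    show "((\<lambda>y. G_diff y - 2 * ipow 0 5 y) has_real_derivative G_diff' y + 10 * ipow 0 6 y) (at y)"
      if "y > 0" for y
      using that by (auto intro!: derivative_eq_intros has_real_derivative_G_diff)
    show "G_diff' y + 10 * ipow 0 6 y > 0" if "y > 0" for y
      using G_diff'_plus_ipow_pos[OF that] .
    have "((\<lambda>y. 2 * ipow 0 5 y) \<longlongrightarrow> 0) at_top" unfolding ipow_def by real_asymp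
    then show "((\<lambda>y. G_diff y - 2 * ipow 0 5 y) \<longlongrightarrow> 0) at_top"
      using tendsto_diff[OF G_diff_tendsto_0] by fastforce
  qed (use assms in simp)
  then show ?thesis by simp
qed

lemma K_pf_upper: assumes "x > 0" shows "K_pf x < - 1/30 * ipow 1 3 x"
proof -
  have "K_pf x + 1/30 * ipow 1 3 x < 0"
  proof (rule neg_if_deriv_pos_tendsto_0[where a = 0 and f = "\<lambda>y. K_pf y + 1/30 * ipow 1 3 y"
      and f' = "\<lambda>y. K_pf' y - 1/10 * ipow 1 4 y"])
    show "((\<lambda>y. K_pf y + 1/30 * ipow 1 3 y) has_real_derivative K_pf' y - 1/10 * ipow 1 4 y) (at y)"
      if "y > 0" for y
      using that by (auto intro!: derivative_eq_intros has_real_derivative_K_pf)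
    show "K_pf' y - 1/10 * ipow 1 4 y > 0" if "y > 0" for y using K_pf'_minus_ipow_pos[OF that] .
    have "((\<lambda>y. 1/30 * ipow 1 3 y) \<longlongrightarrow> 0) at_top" unfolding ipow_def by real_asymp
    then show "((\<lambda>y. K_pf y + 1/30 * ipow 1 3 y) \<longlongrightarrow> 0) at_top"
      using tendsto_add[OF K_pf_tendsto_0] by fastforce
  qed (use assms in simp)
  then show ?thesis by simp
qed

lemma Digamma_plus_of_nat:
  fixes x :: real
  assumes "x > 0"
  shows "Digamma (x + real n) = Digamma x + (\<Sum>k<n. inverse (x + real k))"
proof (induction n)
  case (Suc n)
  have "Digamma (x + real (Suc n)) = Digamma (x + real n) + 1 / (x + real n)"
    using Digamma_plus1[of "x + real n"] assms by (simp add: ac_simps)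
  with Suc show ?case by (simp add: inverse_eq_divide)
qed simp

lemma M_fun_shift_tendsto_0:
  assumes "x > 0"
  shows "(\<lambda>n. M_fun (x + real n)) \<longlonglongrightarrow> 0"
proof -
  have "(\<lambda>n. Digamma x - (ln (real n) - (\<Sum>k<n. inverse (x + real k)))) \<longlonglongrightarrow> Digamma x - Digamma x"
    using Digamma_LIMSEQ[of x] assms by (intro tendsto_intros) simp
  moreover note Digamma_plus_of_nat[OF assms]
  ultimately have psi: "(\<lambda>n. Digamma (x + real n) - ln (real n)) \<longlonglongrightarrow> 0"
    by (simp add: algebra_simps)
  have "((\<lambda>y. ln y - M_rat y - (43 * lnsh 1 y - 37 * lnsh 2 y) / 6) \<longlongrightarrow> 0) at_top"
    unfolding M_rat_def ipow_def lnsh_def by real_asymp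
  from tendsto_shifted_sequentially[OF this, of x]
  have rest: "(\<lambda>n. ln (x + real n) - M_rat (x + real n)
                 - (43 * lnsh 1 (x + real n) - 37 * lnsh 2 (x + real n)) / 6) \<longlonglongrightarrow> 0" .
  have ln_shift: "(\<lambda>n. ln (x + real n) - ln (real n)) \<longlonglongrightarrow> 0" by real_asymp
  have "M_fun (x + real n) = (Digamma (x + real n) - ln (real n)) - (ln (x + real n) - ln (real n))
          + (ln (x + real n) - M_rat (x + real n) - (43 * lnsh 1 (x + real n) - 37 * lnsh 2 (x + real n)) / 6)"
    for n using M_fun_eq[of "x + real n"] assms by simp
  with tendsto_add[OF tendsto_diff[OF psi ln_shift] rest] show ?thesis by simp
qed

lemma M_fun_sums: "x > 0 \<Longrightarrow> (\<lambda>k. M_diff (x + real k)) sums M_fun x"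
  by (intro sums_of_shift_difference M_fun_diff M_fun_shift_tendsto_0) simp_all

lemma K_pf_sums: "(\<lambda>k. K_diff (x + real k)) sums K_pf x"
  by (intro sums_of_shift_difference K_pf_diff tendsto_shifted_sequentially K_pf_tendsto_0)

lemma M_fun_neg: assumes "x > 0" shows "M_fun x < 0"
proof -
  have "0 < - M_fun x"
    using sums_minus[OF M_fun_sums[OF assms]] by (rule sums_pos) (use M_diff_neg assms in simp)
  then show ?thesis by simp
qed

lemma M_minus_4K_sums: "x > 0 \<Longrightarrow> (\<lambda>k. G_diff (x + real k)) sums (M_fun x - 4 * K_pf x)"
  unfolding G_diff_def using sums_diff[OF M_fun_sums sums_mult[OF K_pf_sums, of 4]] by simp

lemma M_minus_4K_pos: assumes "x > 0" shows "M_fun x - 4 * K_pf x > 0"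
  using M_minus_4K_sums[OF assms] by (rule sums_pos) (use G_diff_pos assms in simp)

lemma inverse_power_5_le: assumes "y \<ge> (2::real)"
  shows "inverse y ^ 5 \<le> 1/4 * (inverse (y - 1) ^ 4 - inverse y ^ 4)"
proof -
  have "(inverse (y - 1) ^ 4 - inverse y ^ 4 - 4 * inverse y ^ 5) * (y^5 * (y - 1)^4)
          = 10 * y^2 * (y - 2) + 15 * y - 4"
  proof -
    have "y * inverse y = 1" "(y - 1) * inverse (y - 1) = 1" using assms by simp_all
    then show ?thesis by algebra
  qed
  moreover have "0 < 10 * y^2 * (y - 2) + 15 * y - 4" using assms by (smt (verit) mult_nonneg_nonneg zero_le_power2)
  moreover have "0 < y^5 * (y - 1)^4" using assms by simp
  ultimately have "0 < inverse (y - 1) ^ 4 - inverse y ^ 4 - 4 * inverse y ^ 5" by (metis zero_less_mult_pos2)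
  then show ?thesis by simp
qed

lemma M_minus_4K_upper: assumes "x \<ge> 2" shows "M_fun x - 4 * K_pf x \<le> 1/2 * inverse (x - 1) ^ 4"
proof (rule sums_le)
  show "(\<lambda>k. G_diff (x + real k)) sums (M_fun x - 4 * K_pf x)"
    using M_minus_4K_sums assms by simp
  have "((\<lambda>y::real. 1/2 * inverse (y - 1) ^ 4) \<longlongrightarrow> 0) at_top" by real_asymp
  then show "(\<lambda>k. 1/2 * (inverse (x + real k - 1) ^ 4 - inverse (x + real k) ^ 4))
               sums (1/2 * inverse (x - 1) ^ 4)"
    by (intro sums_of_shift_difference tendsto_shifted_sequentially) (simp_all add: algebra_simps)
  fix k
  have "G_diff (x + real k) \<le> 2 * inverse (x + real k) ^ 5"
    using G_diff_upper[of "x + real k"] assms unfolding ipow_def by simp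
  also have "\<dots> \<le> 1/2 * (inverse (x + real k - 1) ^ 4 - inverse (x + real k) ^ 4)"
    using inverse_power_5_le[of "x + real k"] assms by simp
  finally show "G_diff (x + real k) \<le> 1/2 * (inverse (x + real k - 1) ^ 4 - inverse (x + real k) ^ 4)" .
qed

lemma K_fun_neg: assumes "x > 0" shows "K_fun x < 0"
proof -
  have "0 \<le> ipow 1 3 x" unfolding ipow_def using assms by simp
  then show ?thesis using K_pf_upper[OF assms] K_fun_eq[OF assms] by linarith
qed

lemma M_le_K_multiple_at_top:
  assumes "\<xi> < 4"
  shows "\<exists>x>0. M_fun x \<le> \<xi> * K_fun x"
proof -
  define t where "t = 4 - \<xi>"
  define x where "x = 3 + 240 / t"
  have t: "t > 0" using assms unfolding t_def by simp
  have x: "x \<ge> 3" "x + 1 \<ge> 240 / t" using t unfolding x_def by simp_all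
  have "inverse (x - 1) \<le> inverse ((x + 1) / 2)" using x by (intro le_imp_inverse_le) auto
  then have "inverse (x - 1) ^ 4 \<le> (2 * inverse (x + 1)) ^ 4"
    using x by (intro power_mono) (simp_all add: inverse_eq_divide)
  then have "1/2 * inverse (x - 1) ^ 4 \<le> 8 * inverse (x + 1) ^ 3 * inverse (x + 1)"
    by (simp add: power_mult_distrib eval_nat_numeral)
  also have "\<dots> \<le> 8 * inverse (x + 1) ^ 3 * (t / 240)"
  proof -
    have "inverse (x + 1) \<le> inverse (240 / t)" using t x by (intro le_imp_inverse_le) auto
    then show ?thesis using x by (intro mult_left_mono) simp_all
  qed
  finally have G_small: "M_fun x - 4 * K_pf x \<le> t / 30 * inverse (x + 1) ^ 3"
    using M_minus_4K_upper[of x] x by simp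
  have "t * K_pf x \<le> t * (- 1/30 * inverse (x + 1) ^ 3)"
    using K_pf_upper[of x] x t unfolding ipow_def by (intro mult_left_mono) simp_all
  with G_small have "M_fun x \<le> 4 * K_pf x - t * K_pf x" by linarith
  also have "\<dots> = \<xi> * K_pf x" unfolding t_def by (simp add: algebra_simps)
  finally have "M_fun x \<le> \<xi> * K_pf x" .
  with x show ?thesis using K_fun_eq[of x] by (intro exI[of _ x]) simp
qed

lemma M_fun_lower_near_0:
  assumes "0 < x" "x \<le> 1"
  shows "M_fun x \<ge> - euler_mascheroni - 14"
proof -
  define a where "a = inverse (x + 1)"
  define b where "b = inverse (x + 2)"
  have a: "0 < a" "a \<le> 1" using assms unfolding a_def by (simp_all add: inverse_le_1_iff)
  then have "a^3 \<le> 1" by (simp add: power_le_one)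
  have b: "0 < b" "b \<le> 1" using assms unfolding b_def by (simp_all add: inverse_le_1_iff)
  have ln: "lnsh 1 x \<le> 1" "lnsh 2 x \<ge> 0"
    unfolding lnsh_def using ln_le_minus_one[of "x + 1"] assms by simp_all
  have "Digamma (x + 1) \<ge> - euler_mascheroni"
    using Digamma_real_mono[of 1 "x + 1"] assms by simp
  moreover have "M_fun x = Digamma (x + 1) - 7/2 * a + a^2 - 1/6 * a^3 - 13/6 * b
                           - 43/6 * lnsh 1 x + 37/6 * lnsh 2 x"
    using Digamma_plus1[of x] M_fun_eq[OF assms(1)] assms
    unfolding M_rat_def ipow_def a_def b_def by (simp add: diff_divide_distrib inverse_eq_divide)
  ultimately show ?thesis using a \<open>a^3 \<le> 1\<close> b ln zero_le_power2[of a] by linarith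
qed

lemma K_fun_upper_near_0:
  assumes "0 < x" "x \<le> 1"
  shows "K_fun x \<le> ln x / 24 + 1"
proof -
  define a where "a = inverse (x + 1)"
  define b where "b = inverse (x + 2)"
  have a: "0 < a" "a \<le> 1" using assms unfolding a_def by (simp_all add: inverse_le_1_iff)
  then have "a\<^sup>2 \<le> 1" by (simp add: power_le_one)
  have b: "0 < b" using assms unfolding b_def by simp
  have ln: "lnsh 1 x \<ge> 0" "lnsh 2 x \<le> 2"
    unfolding lnsh_def using ln_le_minus_one[of "x + 2"] assms by simp_all
  have "K_fun x = ln x / 24 - 9/24 * lnsh 1 x + 8/24 * lnsh 2 x - 1/8 * a + 1/48 * a\<^sup>2 - 1/6 * b"
    using K_fun_eq[OF assms(1)] unfolding K_pf_def ipow_def a_def b_def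
    by (simp add: lnsh_def add_divide_distrib diff_divide_distrib)
  then show ?thesis using a \<open>a\<^sup>2 \<le> 1\<close> b ln by linarith
qed

lemma K_multiple_le_M_near_0:
  assumes "\<eta> > 0"
  shows "\<exists>x>0. \<eta> * K_fun x \<le> M_fun x"
proof -
  define c where "c = 24 * (euler_mascheroni + 14 + \<eta>) / \<eta>"
  define x where "x = exp (- c)"
  have c: "c > 0" unfolding c_def using assms euler_mascheroni_pos by simp
  have x: "0 < x" "x \<le> 1" "ln x = - c" unfolding x_def using c by simp_all
  have "\<eta> * K_fun x \<le> \<eta> * (ln x / 24 + 1)"
    using K_fun_upper_near_0[OF x(1,2)] assms by (intro mult_left_mono) simp_all
  also have "\<dots> = - euler_mascheroni - 14" unfolding x(3) c_def using assms by (simp add: field_simps)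
  also have "\<dots> \<le> M_fun x" using M_fun_lower_near_0[OF x(1,2)] .
  finally show ?thesis using x by blast
qed

theorem mainTheorem8:
  fixes \<xi> \<eta> :: real
  shows "(\<forall>x::real. x > 0 \<longrightarrow> \<xi> * K_fun x < M_fun x \<and> M_fun x < \<eta> * K_fun x)
         \<longleftrightarrow> (\<xi> \<ge> 4 \<and> \<eta> \<le> 0)"
proof
  assume bounds: "\<forall>x::real. x > 0 \<longrightarrow> \<xi> * K_fun x < M_fun x \<and> M_fun x < \<eta> * K_fun x"
  show "\<xi> \<ge> 4 \<and> \<eta> \<le> 0"
  proof
    show "\<xi> \<ge> 4" using M_le_K_multiple_at_top[of \<xi>] bounds by (meson not_le)
    show "\<eta> \<le> 0" using K_multiple_le_M_near_0[of \<eta>] bounds by (meson not_le)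
  qed
next
  assume params: "\<xi> \<ge> 4 \<and> \<eta> \<le> 0"
  show "\<forall>x::real. x > 0 \<longrightarrow> \<xi> * K_fun x < M_fun x \<and> M_fun x < \<eta> * K_fun x"
  proof (intro allI impI conjI)
    fix x :: real
    assume x: "x > 0"
    have "\<xi> * K_fun x \<le> 4 * K_fun x" using params K_fun_neg[OF x] by (simp add: mult_right_mono_neg)
    also have "\<dots> < M_fun x" using M_minus_4K_pos[OF x] K_fun_eq[OF x] by simp
    finally show "\<xi> * K_fun x < M_fun x" .
    have "M_fun x < 0" using M_fun_neg[OF x] .
    also have "\<dots> \<le> \<eta> * K_fun x" using params K_fun_neg[OF x] by (simp add: mult_nonpos_nonpos)
    finally show "M_fun x < \<eta> * K_fun x" .
  qed
qed

end
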